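(* For all $i,n\ge1$, $b_i(\mathcal{A}_n)<\frac{2^{in}}{i!}$. Consequently, for all $n>1$, the number $R_n$ of chambers of $\mathcal{A}_n$ satisfies $\log_2(R_n)<n^2-n+1$.
   Context: For $n\ge1$, the resonance arrangement $\mathcal{A}_n$ is the arrangement in $\mathbb{R}^n$ of the hyperplanes $H_I=\{x:\sum_{i\in I}x_i=0\}$ for all nonempty $I\subseteq[n]$. For an arrangement $\mathcal{A}$ in $\mathbb{R}^n$, its characteristic polynomial is $\chi(\mathcal{A};t)=\sum_{S\subseteq\mathcal{A}}(-1)^{|S|}t^{r(\mathcal{A})-r(S)}$ where $r(S)=\operatorname{codim}\bigcap_{H\in S}H$, and the $i$-th Betti number $b_i(\mathcal{A})$ is the absolute value of the coefficient of $t^{n-i}$ in $\chi(\mathcal{A};t)$. $R_n$ is the number of chambers (connected components of $\mathbb{R}^n\setminus\bigcup_{H\in\mathcal{A}_n}H$) of $\mathcal{A}_n$. *)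

theory Defs
  imports "HOL-Analysis.Analysis" "HOL-Computational_Algebra.Polynomial"
begin

text \<open>Ambient space R^n is modelled as real^'n with n = CARD('n).
  A hyperplane arrangement is a (finite) set of hyperplanes, i.e. of subsets of real^'n.\<close>

definition res_hyperplane :: "'n::finite set \<Rightarrow> (real^'n) set" where
  "res_hyperplane I = {x. (\<Sum>i\<in>I. x $ i) = 0}"

definition resonance_arrangement :: "(real^'n::finite) set set" where
  "resonance_arrangement = {res_hyperplane I | I. I \<noteq> {}}"

text \<open>r(S) = codimension of the intersection of the hyperplanes in S (empty intersection = whole space).\<close>
definition arr_rank :: "(real^'n::finite) set set \<Rightarrow> nat" where
  "arr_rank S = CARD('n) - dim (\<Inter> S)"

definition char_poly :: "(real^'n::finite) set set \<Rightarrow> int poly" where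
  "char_poly A = (\<Sum>S\<in>Pow A. monom ((-1) ^ card S) (arr_rank A - arr_rank S))"

definition betti :: "(real^'n::finite) set set \<Rightarrow> nat \<Rightarrow> int" where
  "betti A i = (if i \<le> CARD('n) then \<bar>coeff (char_poly A) (CARD('n) - i)\<bar> else 0)"

definition num_chambers :: "(real^'n::finite) set set \<Rightarrow> nat" where
  "num_chambers A = card (components (UNIV - \<Union> A))"

end

theory Submission
  imports Defs
begin

text \<open>Deletion-restriction: if \<open>V\<close> is a subspace not contained in the hyperplane \<open>K\<close>, the
  signed Whitney numbers of an arrangement restricted to \<open>V\<close> obey
  \<open>w V (A + K) (i + 1) = w V A (i + 1) - w (V \<inter> K) A i\<close>, which is Pascal's rule up to sign;
  hence \<open>|b_i| \<le> (|A| choose i)\<close>. The resonance arrangement is essential and consists of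
  \<open>2^n - 1\<close> hyperplanes, so \<open>b_i \<le> (2^n - 1 choose i) < 2^(i n) / i!\<close>.
  Chambers are told apart by their sign vectors, and the same deletion-restriction argument shows
  that \<open>m\<close> hyperplanes realise at most \<open>\<Sum>j\<le>d. m choose j\<close> sign vectors on a
  \<open>d\<close>-dimensional space; for \<open>m = 2^n - 1\<close> and \<open>d = n\<close> this is less than \<open>2^(n^2 - n + 1)\<close>.\<close>

section \<open>Deletion-restriction for Whitney numbers\<close>

lemma dim_subspace_Int_hyperplane:
  fixes a :: "'a::euclidean_space"
  assumes "subspace V" "\<not> V \<subseteq> {x. a \<bullet> x = 0}"
  shows "dim V = Suc (dim (V \<inter> {x. a \<bullet> x = 0}))"
proof -
  have "subspace (V \<inter> {x. a \<bullet> x = 0})"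
    by (simp add: assms(1) subspace_hyperplane subspace_inter)
  moreover have "V \<inter> {x. a \<bullet> x = 0} \<noteq> {}"
    using assms(1) subspace_0 by fastforce
  ultimately have "int (dim (V \<inter> {x. a \<bullet> x = 0})) = int (dim V) - 1"
    using aff_dim_affine_Int_hyperplane[OF subspace_imp_affine[OF assms(1)], of a 0] assms
    by (simp add: aff_dim_subspace)
  then show ?thesis by linarith
qed

lemma convex_comb_same_sign:
  fixes p q t :: real
  assumes "0 \<le> t" "t \<le> 1" "p \<noteq> 0" "q \<noteq> 0" "0 < p \<longleftrightarrow> 0 < q"
  shows "(1 - t) * p + t * q \<noteq> 0 \<and> (0 < (1 - t) * p + t * q \<longleftrightarrow> 0 < p)"
  using assms
  by (smt (verit) mult_pos_pos mult_nonneg_nonneg mult_nonneg_nonpos mult_pos_neg)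

text \<open>The coefficient of \<open>t^(dim V - i)\<close> in the characteristic polynomial of the restriction
  of \<open>A\<close> to \<open>V\<close>.\<close>

definition whitney_number :: "'a::euclidean_space set \<Rightarrow> 'a set set \<Rightarrow> nat \<Rightarrow> int" where
  "whitney_number V A i =
     (\<Sum>S\<in>Pow A. if dim V - dim (V \<inter> \<Inter>S) = i then (-1) ^ card S else 0)"

lemma whitney_number_insert:
  assumes "finite A" "K \<notin> A"
  shows "whitney_number V (insert K A) i = whitney_number V A i
           - (\<Sum>S\<in>Pow A. if dim V - dim (V \<inter> K \<inter> \<Inter>S) = i then (-1) ^ card S else 0)"
proof -
  let ?w = "\<lambda>S. if dim V - dim (V \<inter> \<Inter>S) = i then (-1) ^ card S else (0::int)"
  have inj: "inj_on (insert K) (Pow A)"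
    using assms(2) by (auto simp: inj_on_def)
  have "whitney_number V (insert K A) i = whitney_number V A i + sum ?w (insert K ` Pow A)"
    unfolding whitney_number_def Pow_insert using assms
    by (subst sum.union_disjoint) auto
  also have "sum ?w (insert K ` Pow A) = sum (?w \<circ> insert K) (Pow A)"
    by (rule sum.reindex[OF inj])
  also have "\<dots> = - (\<Sum>S\<in>Pow A. if dim V - dim (V \<inter> K \<inter> \<Inter>S) = i then (-1) ^ card S else 0)"
    unfolding sum_negf[symmetric]
  proof (rule sum.cong[OF refl])
    fix S assume "S \<in> Pow A"
    then have "finite S" "K \<notin> S"
      using assms by (auto intro: finite_subset)
    then have "card (insert K S) = Suc (card S)" by simp
    moreover have "V \<inter> \<Inter>(insert K S) = V \<inter> K \<inter> \<Inter>S" by auto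
    ultimately show "(?w \<circ> insert K) S
        = - (if dim V - dim (V \<inter> K \<inter> \<Inter>S) = i then (-1) ^ card S else 0)"
      by simp
  qed
  finally show ?thesis by simp
qed

lemma whitney_number_insert_superset:
  assumes "finite A" "K \<notin> A" "V \<subseteq> K"
  shows "whitney_number V (insert K A) i = 0"
proof -
  have "V \<inter> K = V" using assms(3) by auto
  then show ?thesis
    using whitney_number_insert[OF assms(1,2), of V i] by (simp add: whitney_number_def)
qed

lemma whitney_number_insert_hyperplane:
  fixes a :: "'a::euclidean_space"
  defines "K \<equiv> {x. a \<bullet> x = 0}"
  assumes "finite A" "K \<notin> A" "subspace V" "\<not> V \<subseteq> K"
  shows "whitney_number V (insert K A) 0 = whitney_number V A 0"
    and "whitney_number V (insert K A) (Suc i) = whitney_number V A (Suc i) - whitney_number (V \<inter> K) A i"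
proof -
  have dimV: "dim V = Suc (dim (V \<inter> K))"
    using dim_subspace_Int_hyperplane assms(4,5) unfolding K_def by blast
  have le: "dim (V \<inter> K \<inter> \<Inter>S) \<le> dim (V \<inter> K)" for S
    by (intro dim_subset) auto
  have "dim V - dim (V \<inter> K \<inter> \<Inter>S) \<noteq> 0" for S
    using le[of S] dimV by linarith
  then have "(\<Sum>S\<in>Pow A. if dim V - dim (V \<inter> K \<inter> \<Inter>S) = 0 then (-1) ^ card S else 0) = (0::int)"
    by simp
  then show "whitney_number V (insert K A) 0 = whitney_number V A 0"
    using whitney_number_insert[OF assms(2,3)] by simp
  have "(\<Sum>S\<in>Pow A. if dim V - dim (V \<inter> K \<inter> \<Inter>S) = Suc i then (-1) ^ card S else 0)
        = whitney_number (V \<inter> K) A i"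
    unfolding whitney_number_def using le dimV by (intro sum.cong refl) (simp add: Suc_diff_le)
  then show "whitney_number V (insert K A) (Suc i) = whitney_number V A (Suc i) - whitney_number (V \<inter> K) A i"
    using whitney_number_insert[OF assms(2,3)] by simp
qed

lemma abs_whitney_number_le:
  fixes A :: "'a::euclidean_space set set"
  assumes "finite A" "\<forall>K\<in>A. \<exists>a. K = {x. a \<bullet> x = 0}" "subspace V"
  shows "\<bar>whitney_number V A i\<bar> \<le> int (card A choose i)"
  using assms
proof (induction A arbitrary: V i rule: finite_induct)
  case empty
  show ?case by (cases i) (auto simp: whitney_number_def)
next
  case (insert K A)
  obtain a where K: "K = {x. a \<bullet> x = 0}" using insert.prems by auto
  show ?case
  proof (cases "V \<subseteq> K")
    case True
    then show ?thesis using whitney_number_insert_superset[OF insert.hyps] by simp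
  next
    case False
    note rec = whitney_number_insert_hyperplane[OF insert.hyps[unfolded K] insert.prems(2) False[unfolded K]]
    show ?thesis
    proof (cases i)
      case 0
      then show ?thesis using rec(1) insert.IH[of V 0] insert.prems K by simp
    next
      case (Suc j)
      have "subspace (V \<inter> K)"
        unfolding K by (simp add: insert.prems(2) subspace_hyperplane subspace_inter)
      then have "\<bar>whitney_number (V \<inter> K) A j\<bar> \<le> int (card A choose j)"
        using insert.IH insert.prems by simp
      moreover have "\<bar>whitney_number V A (Suc j)\<bar> \<le> int (card A choose Suc j)"
        using insert.IH insert.prems by simp
      ultimately show ?thesis
        using rec(2)[of j] insert.hyps Suc K by simp
    qed
  qed
qed

lemma coeff_char_poly_essential:
  fixes A :: "(real^'n::finite) set set"
  assumes "dim (\<Inter>A) = 0" "i \<le> CARD('n)"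
  shows "coeff (char_poly A) (CARD('n) - i) = whitney_number UNIV A i"
proof -
  have rank: "arr_rank A = CARD('n)"
    unfolding arr_rank_def using assms(1) by (simp del: dim_eq_0)
  have "CARD('n) - arr_rank S = CARD('n) - i
          \<longleftrightarrow> dim (UNIV :: (real^'n) set) - dim (UNIV \<inter> \<Inter>S) = i" for S :: "(real^'n) set set"
    using dim_subset_UNIV_cart[of "\<Inter>S"] assms(2) unfolding arr_rank_def by auto
  then show ?thesis
    unfolding char_poly_def coeff_sum coeff_monom whitney_number_def rank
    by (intro sum.cong) auto
qed

lemma betti_le_binomial:
  fixes A :: "(real^'n::finite) set set"
  assumes "finite A" "\<forall>K\<in>A. \<exists>a. K = {x. a \<bullet> x = 0}" "dim (\<Inter>A) = 0"
  shows "betti A i \<le> int (card A choose i)"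
  using abs_whitney_number_le[OF assms(1,2) subspace_UNIV, of i] coeff_char_poly_essential[OF assms(3)]
  by (simp add: betti_def)

section \<open>Counting regions by sign vectors\<close>

definition positive_side :: "'a::real_inner set \<Rightarrow> 'a \<Rightarrow> 'a set" where
  "positive_side N x = {a\<in>N. 0 < a \<bullet> x}"

definition sign_vectors :: "'a::real_inner set \<Rightarrow> 'a set \<Rightarrow> 'a set set" where
  "sign_vectors V N = positive_side N ` {x\<in>V. \<forall>a\<in>N. a \<bullet> x \<noteq> 0}"

lemma sign_vectors_subset_Pow: "sign_vectors V N \<subseteq> Pow N"
  by (auto simp: sign_vectors_def positive_side_def)

lemma positive_side_closed_segment:
  fixes x y z :: "'a::real_inner"
  assumes "\<forall>a\<in>N. a \<bullet> x \<noteq> 0" "\<forall>a\<in>N. a \<bullet> y \<noteq> 0"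
    and "positive_side N x = positive_side N y" "z \<in> closed_segment x y"
  shows "(\<forall>a\<in>N. a \<bullet> z \<noteq> 0) \<and> positive_side N z = positive_side N x"
proof -
  obtain u where u: "0 \<le> u" "u \<le> 1" "z = (1 - u) *\<^sub>R x + u *\<^sub>R y"
    using assms(4) by (auto simp: in_segment)
  have "a \<bullet> z \<noteq> 0 \<and> (0 < a \<bullet> z \<longleftrightarrow> 0 < a \<bullet> x)" if "a \<in> N" for a
  proof -
    have "0 < a \<bullet> x \<longleftrightarrow> 0 < a \<bullet> y"
      using assms(3) that by (auto simp: positive_side_def set_eq_iff)
    moreover have "a \<bullet> z = (1 - u) * (a \<bullet> x) + u * (a \<bullet> y)"
      using u(3) by (simp add: inner_add_right)
    ultimately show ?thesis
      using convex_comb_same_sign[OF u(1,2)] assms(1,2) that by simp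
  qed
  then show ?thesis by (auto simp: positive_side_def)
qed

text \<open>A sign vector of \<open>N\<close> realised on both sides of the new hyperplane \<open>b \<bullet> x = 0\<close> is,
  by walking along a segment, also realised on that hyperplane.\<close>

lemma card_sign_vectors_insert_le:
  fixes b :: "'a::real_inner"
  assumes "finite N" "b \<notin> N" "convex V"
  shows "card (sign_vectors V (insert b N))
           \<le> card (sign_vectors V N) + card (sign_vectors (V \<inter> {x. b \<bullet> x = 0}) N)"
proof -
  let ?\<Sigma> = "sign_vectors V (insert b N)"
  let ?P = "{\<sigma>\<in>?\<Sigma>. b \<in> \<sigma>}" and ?Q = "{\<sigma>\<in>?\<Sigma>. b \<notin> \<sigma>}"
  let ?del = "\<lambda>\<sigma>. \<sigma> - {b}"
  have del: "?del (positive_side (insert b N) x) = positive_side N x" for x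
    using assms(2) by (auto simp: positive_side_def)
  have fin: "finite (sign_vectors W M)" if "finite M" for W and M :: "'a set"
    using that sign_vectors_subset_Pow by (metis finite_Pow_iff finite_subset)
  have inj: "inj_on ?del ?P" "inj_on ?del ?Q"
    by (auto intro!: inj_onI)
  have "?del ` ?\<Sigma> \<subseteq> sign_vectors V N"
    unfolding sign_vectors_def image_image del by auto
  then have Un: "?del ` ?P \<union> ?del ` ?Q \<subseteq> sign_vectors V N" by blast
  have Int: "?del ` ?P \<inter> ?del ` ?Q \<subseteq> sign_vectors (V \<inter> {x. b \<bullet> x = 0}) N"
  proof
    fix \<sigma> assume "\<sigma> \<in> ?del ` ?P \<inter> ?del ` ?Q"
    then obtain \<sigma>\<^sub>1 \<sigma>\<^sub>2 where "\<sigma>\<^sub>1 \<in> ?P" "\<sigma>\<^sub>2 \<in> ?Q" "\<sigma> = \<sigma>\<^sub>1 - {b}" "\<sigma> = \<sigma>\<^sub>2 - {b}"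
      by blast
    then obtain x y where x: "x \<in> V" "\<forall>a\<in>insert b N. a \<bullet> x \<noteq> 0" "\<sigma>\<^sub>1 = positive_side (insert b N) x"
      and y: "y \<in> V" "\<forall>a\<in>insert b N. a \<bullet> y \<noteq> 0" "\<sigma>\<^sub>2 = positive_side (insert b N) y"
      and "b \<in> \<sigma>\<^sub>1" "b \<notin> \<sigma>\<^sub>2" "\<sigma> = \<sigma>\<^sub>1 - {b}" "\<sigma> = \<sigma>\<^sub>2 - {b}"
      unfolding sign_vectors_def by blast
    then have "0 < b \<bullet> x" "b \<bullet> y < 0" and \<sigma>: "\<sigma> = positive_side N x" "\<sigma> = positive_side N y"
      using assms(2) by (auto simp: del positive_side_def linorder_neq_iff)
    define t where "t = (b \<bullet> x) / (b \<bullet> x - b \<bullet> y)"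
    define z where "z = (1 - t) *\<^sub>R x + t *\<^sub>R y"
    have "0 \<le> t" "t \<le> 1"
      using \<open>0 < b \<bullet> x\<close> \<open>b \<bullet> y < 0\<close> by (auto simp: t_def divide_simps)
    then have "z \<in> closed_segment x y" by (auto simp: z_def in_segment)
    then have zV: "z \<in> V" and z: "\<forall>a\<in>N. a \<bullet> z \<noteq> 0" "positive_side N z = \<sigma>"
      using closed_segment_subset[OF x(1) y(1) assms(3)]
        positive_side_closed_segment[of N x y z] x(2) y(2) \<sigma> by auto
    have "b \<bullet> z = (1 - t) * (b \<bullet> x) + t * (b \<bullet> y)"
      by (simp add: z_def inner_add_right)
    moreover have "b \<bullet> x - b \<bullet> y \<noteq> 0"
      using \<open>0 < b \<bullet> x\<close> \<open>b \<bullet> y < 0\<close> by linarith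
    ultimately have "b \<bullet> z = 0"
      by (simp add: t_def divide_simps)
    with zV z show "\<sigma> \<in> sign_vectors (V \<inter> {x. b \<bullet> x = 0}) N"
      unfolding sign_vectors_def by force
  qed
  have "?\<Sigma> = ?P \<union> ?Q" by auto
  then have "card ?\<Sigma> \<le> card (?del ` ?P) + card (?del ` ?Q)"
    using card_Un_le[of ?P ?Q] by (simp add: card_image inj)
  also have "\<dots> = card (?del ` ?P \<union> ?del ` ?Q) + card (?del ` ?P \<inter> ?del ` ?Q)"
    using fin[OF finite_insert[THEN iffD2, OF assms(1)], of V] by (intro card_Un_Int) auto
  also have "\<dots> \<le> card (sign_vectors V N) + card (sign_vectors (V \<inter> {x. b \<bullet> x = 0}) N)"
    using Un Int fin[OF assms(1)] by (intro add_mono card_mono)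
  finally show ?thesis .
qed

lemma sum_binomial_Suc:
  "(\<Sum>j\<le>Suc e. Suc m choose j) = (\<Sum>j\<le>Suc e. m choose j) + (\<Sum>j\<le>e. m choose j)"
  by (simp only: sum.atMost_Suc_shift binomial_Suc_Suc sum.distrib) simp

lemma card_sign_vectors_le:
  fixes N :: "'a::euclidean_space set"
  assumes "finite N" "subspace V" "dim V \<le> d"
  shows "card (sign_vectors V N) \<le> (\<Sum>j\<le>d. card N choose j)"
  using assms
proof (induction N arbitrary: V d rule: finite_induct)
  case empty
  have "card (sign_vectors V {}) \<le> card {{} :: 'a set}"
    using sign_vectors_subset_Pow by (intro card_mono) auto
  moreover have "(\<Sum>j\<le>d. 0 choose j) = (1::nat)" by (induction d) auto
  ultimately show ?case by simp
next
  case (insert b N)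
  show ?case
  proof (cases "V \<subseteq> {x. b \<bullet> x = 0}")
    case True
    then have "sign_vectors V (insert b N) = {}" by (auto simp: sign_vectors_def)
    then show ?thesis by simp
  next
    case False
    then have dimV: "dim V = Suc (dim (V \<inter> {x. b \<bullet> x = 0}))"
      using dim_subspace_Int_hyperplane insert.prems(1) by blast
    then obtain e where e: "d = Suc e" "dim (V \<inter> {x. b \<bullet> x = 0}) \<le> e"
      using insert.prems(2) by (metis Suc_le_D Suc_le_mono)
    have "subspace (V \<inter> {x. b \<bullet> x = 0})"
      by (simp add: insert.prems(1) subspace_hyperplane subspace_inter)
    then have "card (sign_vectors (V \<inter> {x. b \<bullet> x = 0}) N) \<le> (\<Sum>j\<le>e. card N choose j)"
      using insert.IH e(2) by blast
    moreover have "card (sign_vectors V N) \<le> (\<Sum>j\<le>Suc e. card N choose j)"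
      using insert.IH insert.prems e(1) by blast
    moreover have "(\<Sum>j\<le>d. card (insert b N) choose j)
        = (\<Sum>j\<le>Suc e. card N choose j) + (\<Sum>j\<le>e. card N choose j)"
      by (simp only: e(1) card_insert_disjoint[OF insert.hyps] sum_binomial_Suc)
    ultimately show ?thesis
      using card_sign_vectors_insert_le[OF insert.hyps subspace_imp_convex[OF insert.prems(1)]]
      by linarith
  qed
qed

lemma card_components_le_card_sign_vectors:
  fixes N :: "'a::real_inner set"
  assumes "finite N"
  shows "card (components {x. \<forall>a\<in>N. a \<bullet> x \<noteq> 0}) \<le> card (sign_vectors UNIV N)"
proof -
  let ?S = "{x. \<forall>a\<in>N. a \<bullet> x \<noteq> 0}"
  define chamber where
    "chamber \<sigma> = connected_component_set ?S (SOME y. y \<in> ?S \<and> positive_side N y = \<sigma>)" for \<sigma>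
  have sub: "components ?S \<subseteq> chamber ` sign_vectors UNIV N"
  proof
    fix C assume "C \<in> components ?S"
    then obtain x where x: "x \<in> ?S" "C = connected_component_set ?S x"
      by (auto simp: components_iff)
    define y where "y = (SOME y. y \<in> ?S \<and> positive_side N y = positive_side N x)"
    have "\<exists>y. y \<in> ?S \<and> positive_side N y = positive_side N x"
      using x(1) by (intro exI[of _ x]) simp
    then have "y \<in> ?S \<and> positive_side N y = positive_side N x"
      unfolding y_def by (rule someI_ex)
    then have y: "y \<in> ?S" "positive_side N y = positive_side N x" by auto
    have "closed_segment x y \<subseteq> ?S"
      using positive_side_closed_segment[of N x y] x(1) y by blast
    then have "y \<in> connected_component_set ?S x"
      using connected_component_maximal[of x "closed_segment x y" ?S]
      by (meson connected_segment ends_in_segment subsetD)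
    then have "C = chamber (positive_side N x)"
      unfolding chamber_def y_def[symmetric] x(2) by (rule connected_component_eq[symmetric])
    moreover have "positive_side N x \<in> sign_vectors UNIV N"
      using x(1) by (auto simp: sign_vectors_def)
    ultimately show "C \<in> chamber ` sign_vectors UNIV N" by blast
  qed
  have fin: "finite (sign_vectors UNIV N)"
    using assms sign_vectors_subset_Pow by (metis finite_Pow_iff finite_subset)
  have "card (components ?S) \<le> card (chamber ` sign_vectors UNIV N)"
    using sub fin by (intro card_mono finite_imageI)
  also have "\<dots> \<le> card (sign_vectors UNIV N)"
    using fin by (rule card_image_le)
  finally show ?thesis .
qed

lemma num_chambers_le_sum_binomial:
  fixes N :: "(real^'n::finite) set"
  assumes "finite N"
  shows "num_chambers ((\<lambda>a. {x. a \<bullet> x = 0}) ` N) \<le> (\<Sum>j\<le>CARD('n). card N choose j)"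
proof -
  have "UNIV - \<Union>((\<lambda>a. {x. a \<bullet> x = 0}) ` N) = {x. \<forall>a\<in>N. a \<bullet> x \<noteq> 0}" by auto
  then have "num_chambers ((\<lambda>a. {x. a \<bullet> x = 0}) ` N) \<le> card (sign_vectors UNIV N)"
    unfolding num_chambers_def using card_components_le_card_sign_vectors[OF assms] by simp
  also have "\<dots> \<le> (\<Sum>j\<le>CARD('n). card N choose j)"
    by (rule card_sign_vectors_le[OF assms subspace_UNIV]) (simp add: dim_subset_UNIV_cart)
  finally show ?thesis .
qed

section \<open>Binomial estimates\<close>

lemma Suc_mult_two_power_le_fact: "5 \<le> n \<Longrightarrow> (n + 1) * 2 ^ (n - 1) \<le> (fact n :: nat)"
proof (induction n rule: dec_induct)
  case base
  show ?case by (simp add: fact_numeral)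
next
  case (step n)
  have "(Suc n + 1) * 2 ^ (Suc n - 1) = 2 * (n + 2) * 2 ^ (n - 1)"
    using step.hyps by (cases n) auto
  also have "\<dots> \<le> (n + 1) * ((n + 1) * 2 ^ (n - 1))"
  proof -
    have "2 * (n + 2) \<le> 5 * (n + 1)" by simp
    also have "\<dots> \<le> (n + 1) * (n + 1)"
      using step.hyps by (intro mult_le_mono1) simp
    finally have "2 * (n + 2) \<le> (n + 1) * (n + 1)" .
    then show ?thesis by (metis mult.assoc mult_le_mono1)
  qed
  also have "\<dots> \<le> (n + 1) * fact n"
    by (rule mult_le_mono2[OF step.IH])
  finally show ?case by simp
qed

lemma sum_binomial_two_power_less:
  assumes "2 \<le> n"
  shows "(\<Sum>j\<le>n. (2 ^ n - 1) choose j) < (2 :: nat) ^ (n\<^sup>2 - n + 1)"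
proof (cases "n \<le> 4")
  case True
  have small: "(\<Sum>j\<le>2. 3 choose j) < (2::nat) ^ 3" "(\<Sum>j\<le>3. 7 choose j) < (2::nat) ^ 7"
    "(\<Sum>j\<le>4. 15 choose j) < (2::nat) ^ 13"
    by (simp_all add: atMost_nat_numeral binomial_fact' fact_numeral)
  have "n = 2 \<or> n = 3 \<or> n = 4" using True assms by linarith
  then show ?thesis using small by (elim disjE) simp_all
next
  case False
  \<comment> \<open>since \<open>2 n \<le> 2^n - 1\<close>, the term \<open>j = n\<close> is the largest one\<close>
  let ?M = "2 ^ n - 1 :: nat"
  have "2 * k < 2 ^ k" if "3 \<le> k" for k :: nat
    using that by (induction k rule: dec_induct) simp_all
  then have "2 * n < 2 ^ n" using False by simp
  then have "2 * n \<le> ?M" by simp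
  then have "(\<Sum>j\<le>n. ?M choose j) \<le> (n + 1) * (?M choose n)"
    using sum_bounded_above[of "{..n}" "\<lambda>j. ?M choose j" "?M choose n"]
    by (simp add: binomial_mono)
  moreover have "(n + 1) * (?M choose n) < 2 ^ (n\<^sup>2 - n + 1)"
  proof (rule mult_right_less_imp_less)
    have "(?M choose n) * ((n + 1) * 2 ^ (n - 1)) \<le> (?M choose n) * fact n"
      using Suc_mult_two_power_le_fact[of n] False by (intro mult_le_mono2) simp
    then have "(n + 1) * (?M choose n) * 2 ^ (n - 1) \<le> (?M choose n) * fact n"
      by (simp only: ac_simps)
    also have "\<dots> \<le> ?M ^ n" by (rule binomial_fact_pow)
    also have "\<dots> < (2 ^ n) ^ n" using False by (intro power_strict_mono) auto
    also have "\<dots> = 2 ^ (n\<^sup>2 - n + 1) * 2 ^ (n - 1)"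
    proof -
      have "n\<^sup>2 - n + 1 + (n - 1) = n * n"
        using le_square[of n] False by (simp add: power2_eq_square)
      then show ?thesis by (simp only: power_mult[symmetric] power_add[symmetric])
    qed
    finally show "(n + 1) * (?M choose n) * 2 ^ (n - 1) < 2 ^ (n\<^sup>2 - n + 1) * 2 ^ (n - 1)" .
  qed simp
  ultimately show ?thesis by (rule le_less_trans)
qed

section \<open>The resonance arrangement\<close>

definition resonance_normals :: "(real^'n::finite) set" where
  "resonance_normals = (\<lambda>I. \<chi> j. if j \<in> I then 1 else 0) ` {I. I \<noteq> {}}"

lemma res_hyperplane_eq:
  fixes I :: "'n::finite set"
  shows "res_hyperplane I = {x :: real^'n. (\<chi> j. if j \<in> I then 1 else 0) \<bullet> x = 0}"
proof -
  have "(\<chi> j. if j \<in> I then 1 else 0) \<bullet> x = (\<Sum>j\<in>I. x $ j)" for x :: "real^'n"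
  proof -
    have "(\<chi> j. if j \<in> I then 1 else 0) \<bullet> x = (\<Sum>j\<in>UNIV. if j \<in> I then x $ j else 0)"
      unfolding inner_vec_def by (intro sum.cong) auto
    then show ?thesis by (simp add: sum.If_cases)
  qed
  then show ?thesis by (simp add: res_hyperplane_def)
qed

lemma resonance_arrangement_eq:
  "resonance_arrangement = (\<lambda>a. {x. a \<bullet> x = 0}) ` (resonance_normals :: (real^'n::finite) set)"
  unfolding resonance_arrangement_def resonance_normals_def by (auto simp: res_hyperplane_eq)

lemma finite_resonance_normals: "finite resonance_normals"
  by (simp add: resonance_normals_def)

lemma card_resonance_normals_less: "card (resonance_normals :: (real^'n::finite) set) < 2 ^ CARD('n)"
proof -
  have "{I :: 'n set. I \<noteq> {}} = Pow UNIV - {{}}" by auto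
  then have "card (resonance_normals :: (real^'n) set) \<le> card (Pow (UNIV :: 'n set) - {{}})"
    unfolding resonance_normals_def by (metis card_image_le finite)
  also have "\<dots> < 2 ^ CARD('n)" by (simp add: card_Pow)
  finally show ?thesis .
qed

lemma dim_Inter_resonance_arrangement:
  "dim (\<Inter>(resonance_arrangement :: (real^'n::finite) set set)) = 0"
proof -
  have "x = 0" if "x \<in> \<Inter>(resonance_arrangement :: (real^'n) set set)" for x
  proof -
    have "res_hyperplane {j} \<in> (resonance_arrangement :: (real^'n) set set)" for j
      unfolding resonance_arrangement_def by auto
    then show ?thesis using that by (auto simp: vec_eq_iff res_hyperplane_def)
  qed
  then show ?thesis by auto
qed

lemma betti_resonance_arrangement_less:
  assumes "1 \<le> i"
  shows "real_of_int (betti (resonance_arrangement :: (real^'n::finite) set set) i)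
           < 2 powr (real i * real CARD('n)) / fact i"
proof -
  let ?A = "resonance_arrangement :: (real^'n) set set"
  have "card ?A \<le> card (resonance_normals :: (real^'n) set)"
    unfolding resonance_arrangement_eq by (rule card_image_le[OF finite_resonance_normals])
  then have "card ?A < 2 ^ CARD('n)"
    using card_resonance_normals_less[where 'n='n] by linarith
  then have "(card ?A choose i) * fact i < 2 ^ (i * CARD('n))"
    using binomial_fact_pow[of "card ?A" i] power_strict_mono[of "card ?A" "2 ^ CARD('n)" i] assms
    by (simp add: power_mult mult.commute[of i])
  then have "real ((card ?A choose i) * fact i) < real (2 ^ (i * CARD('n)))"
    by (simp only: of_nat_less_iff)
  then have "real (card ?A choose i) * fact i < 2 ^ (i * CARD('n))"
    by simp
  then have "real (card ?A choose i) < 2 powr (real i * real CARD('n)) / fact i"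
    by (simp add: pos_less_divide_eq powr_realpow[symmetric])
  moreover have "betti ?A i \<le> int (card ?A choose i)"
    using betti_le_binomial[OF _ _ dim_Inter_resonance_arrangement] finite_resonance_normals
    unfolding resonance_arrangement_eq by auto
  ultimately show ?thesis by linarith
qed

lemma log_num_chambers_resonance_arrangement_less:
  assumes "1 < CARD('n::finite)"
  shows "log 2 (real (num_chambers (resonance_arrangement :: (real^'n) set set)))
           < real CARD('n) ^ 2 - real CARD('n) + 1"
proof -
  let ?n = "CARD('n)"
  have "num_chambers (resonance_arrangement :: (real^'n) set set)
        \<le> (\<Sum>j\<le>?n. card (resonance_normals :: (real^'n) set) choose j)"
    unfolding resonance_arrangement_eq by (rule num_chambers_le_sum_binomial[OF finite_resonance_normals])
  also have "\<dots> \<le> (\<Sum>j\<le>?n. (2 ^ ?n - 1) choose j)"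
    using card_resonance_normals_less[where 'n='n] by (intro sum_mono binomial_right_mono) simp
  also have "\<dots> < 2 ^ (?n\<^sup>2 - ?n + 1)"
    using assms by (intro sum_binomial_two_power_less) simp
  finally have less: "num_chambers (resonance_arrangement :: (real^'n) set set) < 2 ^ (?n\<^sup>2 - ?n + 1)" .
  have exponent: "real (?n\<^sup>2 - ?n + 1) = real ?n ^ 2 - real ?n + 1"
    by (simp add: of_nat_diff power2_eq_square le_square)
  show ?thesis
  proof (cases "num_chambers (resonance_arrangement :: (real^'n) set set) = 0")
    case True
    have "0 < real ?n ^ 2 - real ?n + 1" unfolding exponent[symmetric] by simp
    then show ?thesis using True by (simp add: log_def) \<comment> \<open>\<open>log 2 0 = 0\<close>\<close>
  next
    case False
    then show ?thesis
      using log2_of_power_less[OF less] exponent by simp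
  qed
qed

theorem mainTheorem3:
  shows "(\<forall>i::nat. i \<ge> 1 \<longrightarrow>
            real_of_int (betti (resonance_arrangement :: (real^'n::finite) set set) i)
              < 2 powr (real i * real CARD('n)) / fact i)
       \<and> (CARD('n) > 1 \<longrightarrow>
            log 2 (real (num_chambers (resonance_arrangement :: (real^'n::finite) set set)))
              < real CARD('n) ^ 2 - real CARD('n) + 1)"
  using betti_resonance_arrangement_less log_num_chambers_resonance_arrangement_less by blast

end
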